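(* Let $x_1, \ldots, x_q \in \mathbb{C}$ and let $r$ be an integer with $1 \leqslant r < q$. Then $$\sum_{s=1}^q (-1)^{s-1} \sum_{1 \leqslant k_1 < \cdots < k_s \leqslant q}\ \sum_{\substack{j_{k_1}, \ldots, j_{k_s} \geqslant 0\\ j_{k_1} + \cdots + j_{k_s} = r}} \binom{2r}{2j_{k_1}, \ldots, 2j_{k_s}} x_{k_1}^{j_{k_1}} \cdots x_{k_s}^{j_{k_s}} = 0,$$ where $\binom{2r}{2j_{k_1}, \ldots, 2j_{k_s}} = \frac{(2r)!}{(2j_{k_1})! \cdots (2j_{k_s})!}$ and the $j$'s are integers. *)

theory Defs
  imports Complex_Main
begin

definition multinom2 :: "nat \<Rightarrow> nat set \<Rightarrow> (nat \<Rightarrow> nat) \<Rightarrow> nat" where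
  "multinom2 r K j = fact (2 * r) div (\<Prod>k\<in>K. fact (2 * j k))"

text \<open>Tuples (j_k)_{k in K} of nonnegative integers with sum r, represented as
  functions vanishing outside K.\<close>
definition comps :: "nat set \<Rightarrow> nat \<Rightarrow> (nat \<Rightarrow> nat) set" where
  "comps K r = {j. (\<forall>k. k \<notin> K \<longrightarrow> j k = 0) \<and> (\<Sum>k\<in>K. j k) = r}"

end

theory Submission
  imports Defs
begin

text \<open>Once extended by zero, a tuple \<open>j \<in> comps K r\<close> with \<open>K \<subseteq> {1..q}\<close> is a composition of
  \<open>r\<close> indexed by all of \<open>{1..q}\<close>, and its term (multinomial times monomial) does not depend on
  \<open>K\<close>. Exchanging the two sums, the coefficient of that term is the alternating sum of
  \<open>(-1)^(card K - 1)\<close> over all \<open>K\<close> between the support \<open>U\<close> of \<open>j\<close> and \<open>{1..q}\<close>. Since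
  \<open>card U \<le> r < q\<close>, \<open>U\<close> is a proper subset of \<open>{1..q}\<close>, so this alternating sum vanishes.\<close>

lemma finite_comps:
  assumes "finite K"
  shows "finite (comps K r)"
proof -
  have "j k \<le> r" if "j \<in> comps K r" "k \<in> K" for j k
    using member_le_sum[of k K j] assms that by (simp add: comps_def)
  then have "comps K r \<subseteq> {j. \<forall>k. (k \<in> K \<longrightarrow> j k \<in> {0..r}) \<and> (k \<notin> K \<longrightarrow> j k = 0)}"
    by (auto simp: comps_def)
  then show ?thesis
    by (rule finite_subset) (rule finite_set_of_finite_funs[OF assms finite_atLeastAtMost])
qed

lemma comps_subset_iff:
  assumes "finite L" "K \<subseteq> L"
  shows "j \<in> comps K r \<longleftrightarrow> j \<in> comps L r \<and> {k. j k \<noteq> 0} \<subseteq> K"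
proof -
  have "(\<Sum>k\<in>K. j k) = (\<Sum>k\<in>L. j k)" if "{k. j k \<noteq> 0} \<subseteq> K"
    by (rule sum.mono_neutral_left) (use assms that in auto)
  moreover have "j \<in> comps K r \<longleftrightarrow> {k. j k \<noteq> 0} \<subseteq> K \<and> (\<Sum>k\<in>K. j k) = r"
    by (auto simp: comps_def)
  moreover have "j \<in> comps L r \<longleftrightarrow> {k. j k \<noteq> 0} \<subseteq> L \<and> (\<Sum>k\<in>L. j k) = r"
    by (auto simp: comps_def)
  ultimately show ?thesis
    using assms(2) by (metis subset_trans)
qed

lemma card_support_le_comps:
  assumes "finite K" "j \<in> comps K r"
  shows "card {k. j k \<noteq> 0} \<le> r"
proof -
  have supp: "{k. j k \<noteq> 0} \<subseteq> K"
    using assms(2) by (auto simp: comps_def)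
  have "card {k. j k \<noteq> 0} = (\<Sum>k\<in>{k. j k \<noteq> 0}. 1)"
    by simp
  also have "\<dots> \<le> (\<Sum>k\<in>{k. j k \<noteq> 0}. j k)"
    by (rule sum_mono) auto
  also have "\<dots> = (\<Sum>k\<in>K. j k)"
    by (rule sum.mono_neutral_left) (use assms(1) supp in auto)
  finally show ?thesis
    using assms(2) by (simp add: comps_def)
qed

lemma multinom2_extend:
  assumes "finite L" "K \<subseteq> L" "j \<in> comps K r"
  shows "multinom2 r K j = multinom2 r L j"
proof -
  have "(\<Prod>k\<in>K. fact (2 * j k)) = (\<Prod>k\<in>L. fact (2 * j k) :: nat)"
    by (rule prod.mono_neutral_left) (use assms in \<open>auto simp: comps_def\<close>)
  then show ?thesis
    by (simp add: multinom2_def)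
qed

lemma sum_subsupersets_alternating:
  assumes "finite S" "U \<subset> S"
  shows "(\<Sum>T | T \<subseteq> S \<and> U \<subseteq> T. (-1) ^ card T) = (0 :: 'a :: ring_1)"
proof (rule sum_alternating_cancels)
  show "finite {T. T \<subseteq> S \<and> U \<subseteq> T}"
    using assms(1) by simp
  show "card {T \<in> {T. T \<subseteq> S \<and> U \<subseteq> T}. even (card T)} = card {T \<in> {T. T \<subseteq> S \<and> U \<subseteq> T}. odd (card T)}"
    using card_subsupersets_even_odd[OF assms] by simp
qed

lemma sum_Pow_by_card:
  assumes "finite A"
  shows "(\<Sum>K\<in>Pow A. g K) = (\<Sum>s=0..card A. \<Sum>K | K \<subseteq> A \<and> card K = s. g K)"
proof -
  have "(\<Sum>K\<in>Pow A. g K) = (\<Sum>s\<in>{0..card A}. \<Sum>K | K \<in> Pow A \<and> card K = s. g K)"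
  proof (rule sum.group[symmetric])
    show "card ` Pow A \<subseteq> {0..card A}"
      using assms by (auto intro: card_mono)
  qed (use assms in simp_all)
  then show ?thesis
    by simp
qed

lemma alternating_sum_comps_eq_0:
  fixes w :: "(nat \<Rightarrow> nat) \<Rightarrow> 'a :: comm_ring_1"
  assumes "finite A" "r < card A"
  shows "(\<Sum>K\<in>Pow A. (-1) ^ card K * (\<Sum>j\<in>comps K r. w j)) = 0"
proof -
  have "(\<Sum>K\<in>Pow A. (-1) ^ card K * (\<Sum>j\<in>comps K r. w j))
      = (\<Sum>K\<in>Pow A. \<Sum>j | j \<in> comps A r \<and> j \<in> comps K r. (-1) ^ card K * w j)"
  proof (rule sum.cong[OF refl])
    fix K assume "K \<in> Pow A"
    then have "{j. j \<in> comps A r \<and> j \<in> comps K r} = comps K r"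
      using comps_subset_iff[OF assms(1)] by blast
    then show "(-1) ^ card K * (\<Sum>j\<in>comps K r. w j)
        = (\<Sum>j | j \<in> comps A r \<and> j \<in> comps K r. (-1) ^ card K * w j)"
      by (simp add: sum_distrib_left)
  qed
  also have "\<dots> = (\<Sum>j\<in>comps A r. \<Sum>K | K \<in> Pow A \<and> j \<in> comps K r. (-1) ^ card K * w j)"
    by (rule sum.swap_restrict) (simp_all add: assms(1) finite_comps)
  also have "\<dots> = (\<Sum>j\<in>comps A r. (\<Sum>K | K \<subseteq> A \<and> {k. j k \<noteq> 0} \<subseteq> K. (-1) ^ card K) * w j)"
  proof (rule sum.cong[OF refl])
    fix j assume "j \<in> comps A r"
    then have "{K. K \<in> Pow A \<and> j \<in> comps K r} = {K. K \<subseteq> A \<and> {k. j k \<noteq> 0} \<subseteq> K}"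
      using comps_subset_iff[OF assms(1), of _ j r] by blast
    then show "(\<Sum>K | K \<in> Pow A \<and> j \<in> comps K r. (-1) ^ card K * w j)
        = (\<Sum>K | K \<subseteq> A \<and> {k. j k \<noteq> 0} \<subseteq> K. (-1) ^ card K) * w j"
      by (simp add: sum_distrib_right)
  qed
  also have "\<dots> = 0"
  proof (rule sum.neutral, rule ballI)
    fix j assume j: "j \<in> comps A r"
    have "{k. j k \<noteq> 0} \<subseteq> A"
      using j by (auto simp: comps_def)
    moreover have "card {k. j k \<noteq> 0} < card A"
      using card_support_le_comps[OF assms(1) j] assms(2) by linarith
    ultimately have "{k. j k \<noteq> 0} \<subset> A"
      by auto
    from sum_subsupersets_alternating[where 'a = 'a, OF assms(1) this]
    show "(\<Sum>K | K \<subseteq> A \<and> {k. j k \<noteq> 0} \<subseteq> K. (-1) ^ card K) * w j = 0"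
      by simp
  qed
  finally show ?thesis .
qed

theorem lemma1:
  fixes x :: "nat \<Rightarrow> complex" and q r :: nat
  assumes "1 \<le> r" and "r < q"
  shows "(\<Sum>s=1..q. (-1) ^ (s - 1) *
            (\<Sum>K\<in>{K. K \<subseteq> {1..q} \<and> card K = s}.
               (\<Sum>j\<in>comps K r.
                  of_nat (multinom2 r K j) * (\<Prod>k\<in>K. x k ^ j k)))) = 0"
proof -
  define A where "A = {1..q}"
  define F where "F K = (\<Sum>j\<in>comps K r. of_nat (multinom2 r K j) * (\<Prod>k\<in>K. x k ^ j k))" for K
  define t where "t j = of_nat (multinom2 r A j) * (\<Prod>k\<in>A. x k ^ j k)" for j
  have A: "finite A" "card A = q"
    by (simp_all add: A_def)
  have "F K = (\<Sum>j\<in>comps K r. t j)" if "K \<subseteq> A" for K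
    unfolding F_def t_def using A(1) that
    by (intro sum.cong refl arg_cong2[where f = "(*)"] prod.mono_neutral_left)
      (auto simp: multinom2_extend comps_def)
  then have "(\<Sum>K\<in>Pow A. (-1) ^ card K * F K) = 0"
    using alternating_sum_comps_eq_0[OF A(1), of r t] assms(2) A(2) by simp
  moreover have "F {} = 0"
    using assms(1) by (simp add: F_def comps_def)
  moreover have "{K. K \<subseteq> A \<and> card K = 0} = {{}}"
    using A(1) by (auto dest: finite_subset)
  ultimately have "(\<Sum>s=1..q. (-1) ^ s * (\<Sum>K | K \<subseteq> A \<and> card K = s. F K)) = 0"
    using A by (simp add: sum_Pow_by_card sum.atLeast_Suc_atMost sum_distrib_left)
  moreover have "(-1) ^ (s - 1) = - ((-1 :: complex) ^ s)" if "1 \<le> s" for s :: nat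
    using that by (cases s) simp_all
  ultimately have "(\<Sum>s=1..q. (-1) ^ (s - 1) * (\<Sum>K | K \<subseteq> A \<and> card K = s. F K)) = 0"
    by (simp add: sum_negf cong: sum.cong_simp)
  then show ?thesis
    unfolding F_def A_def .
qed

end
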